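(* Let $N\ge1$, $T>0$, and consider minimizing $\int_0^T\mathbb V(t)\,dt$ with $\mathbb V=\frac1N\sum_i\xi_i^2$ over $\alpha\in\mathcal U$, where $\dot\xi_i=-\xi_i+(1-\alpha_i)\bar\xi$, $\bar\xi=\frac1N\sum_j\xi_j$, with $\bar\xi(0)>0$ and $\xi_1(0)\ge\dots\ge\xi_N(0)$. Let $\alpha$ be an optimal control whose trajectory satisfies $\xi_i(t)\ge\xi_j(t)$ for all $t\in[0,T]$ and all $i<j$, and let $\lambda$ be a (normal) covector associated with it by the Pontryagin maximum principle, i.e. $\dot\lambda_i=\lambda_i-\frac1N\sum_j(1-\alpha_j)\lambda_j-2\xi_i$ for $i=1,\dots,N$, with $\lambda(T)=0$. Then for all $t\in[0,T]$ and all $i<j$, $\lambda_i(t)\ge\lambda_j(t)$.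
   Context: $\mathcal U$ is the set of measurable $\alpha:[0,T]\to[0,1]^N$ with $\sum_i\alpha_i(t)\le1$ for all $t$. The covector equation comes from the Hamiltonian $H=-\sum_i\lambda_i\xi_i+\bar\xi\sum_i(1-\alpha_i)\lambda_i+\sum_i\xi_i^2$. *)

theory Defs
  imports "HOL-Analysis.Analysis"
begin

text \<open>States, controls and covectors are functions of time with values
  in nat \<Rightarrow> real; only the components with index i < N are relevant
  (the paper's indices 1..N correspond to 0..N-1 here).\<close>

definition admissible :: "nat \<Rightarrow> real \<Rightarrow> (real \<Rightarrow> nat \<Rightarrow> real) \<Rightarrow> bool" where
  "admissible N T \<alpha> \<longleftrightarrow>
     (\<forall>i<N. (\<lambda>t. \<alpha> t i) \<in> borel_measurable (lebesgue_on {0..T})) \<and>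
     (\<forall>t\<in>{0..T}. (\<forall>i<N. 0 \<le> \<alpha> t i \<and> \<alpha> t i \<le> 1) \<and> (\<Sum>i<N. \<alpha> t i) \<le> 1)"

definition mean :: "nat \<Rightarrow> (nat \<Rightarrow> real) \<Rightarrow> real" where
  "mean N x = (\<Sum>j<N. x j) / real N"

definition trajectory :: "nat \<Rightarrow> real \<Rightarrow> (real \<Rightarrow> nat \<Rightarrow> real) \<Rightarrow> (real \<Rightarrow> nat \<Rightarrow> real) \<Rightarrow> bool" where
  "trajectory N T \<alpha> \<xi> \<longleftrightarrow>
     (\<forall>i<N. continuous_on {0..T} (\<lambda>t. \<xi> t i)) \<and>
     (\<forall>i<N. \<forall>t\<in>{0..T}.
        ((\<lambda>s. - \<xi> s i + (1 - \<alpha> s i) * mean N (\<xi> s)) has_integral (\<xi> t i - \<xi> 0 i)) {0..t})"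

definition cost :: "nat \<Rightarrow> real \<Rightarrow> (real \<Rightarrow> nat \<Rightarrow> real) \<Rightarrow> real" where
  "cost N T \<xi> = integral {0..T} (\<lambda>t. (\<Sum>i<N. (\<xi> t i)\<^sup>2) / real N)"

definition optimal :: "nat \<Rightarrow> real \<Rightarrow> (real \<Rightarrow> nat \<Rightarrow> real) \<Rightarrow> (real \<Rightarrow> nat \<Rightarrow> real) \<Rightarrow> bool" where
  "optimal N T \<alpha> \<xi> \<longleftrightarrow> admissible N T \<alpha> \<and> trajectory N T \<alpha> \<xi> \<and>
     (\<forall>\<beta> \<zeta>. admissible N T \<beta> \<and> trajectory N T \<beta> \<zeta> \<and> (\<forall>i<N. \<zeta> 0 i = \<xi> 0 i)
        \<longrightarrow> cost N T \<xi> \<le> cost N T \<zeta>)"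

definition covector :: "nat \<Rightarrow> real \<Rightarrow> (real \<Rightarrow> nat \<Rightarrow> real) \<Rightarrow> (real \<Rightarrow> nat \<Rightarrow> real) \<Rightarrow> (real \<Rightarrow> nat \<Rightarrow> real) \<Rightarrow> bool" where
  "covector N T \<alpha> \<xi> p \<longleftrightarrow>
     (\<forall>i<N. continuous_on {0..T} (\<lambda>t. p t i)) \<and>
     (\<forall>i<N. p T i = 0) \<and>
     (\<forall>i<N. \<forall>t\<in>{0..T}.
        ((\<lambda>s. p s i - (\<Sum>j<N. (1 - \<alpha> s j) * p s j) / real N - 2 * \<xi> s i)
           has_integral (p T i - p t i)) {t..T})"

end

theory Submission
  imports Defs
begin

text \<open>Subtracting the covector equations of indices i and j cancels the coupling
  term, so the gap D = \<lambda>_i - \<lambda>_j solves the scalar backward equation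
  D' = D - 2 (\<xi>_i - \<xi>_j) with D(T) = 0. Its forcing term is nonnegative along
  the ordered trajectory, hence exp(-t) D(t), whose derivative is
  -2 exp(-t) (\<xi>_i - \<xi>_j), is nonincreasing and vanishes at T, so D \<ge> 0.
  Optimality enters only through \<xi> being a trajectory of \<alpha>.\<close>

lemma has_real_derivative_of_backward_integral:
  fixes F D :: "real \<Rightarrow> real"
  assumes "continuous_on {a..b} F"
    and "\<And>u. u \<in> {a..b} \<Longrightarrow> (F has_integral (D b - D u)) {u..b}"
    and "u \<in> {a..b}"
  shows "(D has_real_derivative F u) (at u within {a..b})"
proof -
  have "((\<lambda>v. D b - integral {v..b} F) has_real_derivative F u) (at u within {a..b})"
    using integral_has_real_derivative'[OF assms(1,3)]
    by (auto intro!: derivative_eq_intros)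
  moreover have "D b - integral {v..b} F = D v" if "v \<in> {a..b}" for v
    using integral_unique[OF assms(2)[OF that]] by simp
  ultimately show ?thesis
    using has_field_derivative_transform_within[OF _ zero_less_one assms(3)] by blast
qed

lemma backward_linear_equation_nonneg:
  fixes D E :: "real \<Rightarrow> real" and c :: real
  assumes cont_D: "continuous_on {a..b} D" and cont_E: "continuous_on {a..b} E"
    and E_nonneg: "\<And>u. u \<in> {a..b} \<Longrightarrow> E u \<ge> 0"
    and end_nonneg: "D b \<ge> 0"
    and equation: "\<And>u. u \<in> {a..b} \<Longrightarrow> ((\<lambda>s. c * D s - E s) has_integral (D b - D u)) {u..b}"
    and t: "t \<in> {a..b}"
  shows "D t \<ge> 0"
proof -
  define G where "G u = exp (- c * u) * D u" for u
  have G_deriv: "(G has_real_derivative - exp (- c * u) * E u) (at u within {a..b})"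
    if u: "u \<in> {a..b}" for u
  proof -
    have "continuous_on {a..b} (\<lambda>s. c * D s - E s)"
      by (intro continuous_intros cont_D cont_E)
    from has_real_derivative_of_backward_integral[OF this equation u]
    have "(G has_real_derivative - c * exp (- c * u) * D u + exp (- c * u) * (c * D u - E u))
        (at u within {a..b})"
      unfolding G_def by (auto intro!: derivative_eq_intros)
    then show ?thesis by (simp add: algebra_simps)
  qed
  have "G b \<le> G t"
  proof (rule DERIV_nonpos_imp_decreasing_open[of t b G])
    show "t \<le> b" using t by simp
    have "continuous_on {a..b} G"
      using G_deriv by (rule DERIV_continuous_on)
    then show "continuous_on {t..b} G"
      by (rule continuous_on_subset) (use t in auto)
    fix x assume "t < x" "x < b"
    with t have x: "x \<in> {a..b}" and "at x within {a..b} = at x"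
      using at_within_Icc_at[of a x b] by auto
    with G_deriv have "(G has_real_derivative - exp (- c * x) * E x) (at x)"
      by metis
    moreover have "- exp (- c * x) * E x \<le> 0"
      using E_nonneg[OF x] by simp
    ultimately show "\<exists>y. (G has_real_derivative y) (at x) \<and> y \<le> 0"
      by blast
  qed
  moreover have "G b \<ge> 0" using end_nonneg by (simp add: G_def)
  ultimately have "exp (- c * t) * D t \<ge> 0" by (simp add: G_def)
  then show ?thesis by (simp add: zero_le_mult_iff)
qed

lemma covector_difference_equation:
  assumes "covector N T \<alpha> \<xi> p" and "i < N" and "j < N" and "u \<in> {0..T}"
  shows "((\<lambda>s. (p s i - p s j) - 2 * (\<xi> s i - \<xi> s j)) has_integral
           ((p T i - p T j) - (p u i - p u j))) {u..T}"
proof -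
  let ?coupling = "\<lambda>s. (\<Sum>k<N. (1 - \<alpha> s k) * p s k) / real N"
  have "((\<lambda>s. p s k - ?coupling s - 2 * \<xi> s k) has_integral (p T k - p u k)) {u..T}"
    if "k < N" for k
    using assms(1,4) that unfolding covector_def by blast
  from has_integral_diff[OF this[OF \<open>i < N\<close>] this[OF \<open>j < N\<close>]]
  show ?thesis by (simp add: algebra_simps del: sum_divide_distrib)
qed

theorem proposition8:
  fixes N :: nat and T :: real
    and \<alpha> \<xi> p :: "real \<Rightarrow> nat \<Rightarrow> real"
  assumes "N \<ge> 1" and "T > 0"
    and "mean N (\<xi> 0) > 0"
    and "\<forall>i j. i < j \<and> j < N \<longrightarrow> \<xi> 0 i \<ge> \<xi> 0 j"
    and "optimal N T \<alpha> \<xi>"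
    and "\<forall>t\<in>{0..T}. \<forall>i j. i < j \<and> j < N \<longrightarrow> \<xi> t i \<ge> \<xi> t j"
    and "covector N T \<alpha> \<xi> p"
  shows "\<forall>t\<in>{0..T}. \<forall>i j. i < j \<and> j < N \<longrightarrow> p t i \<ge> p t j"
proof (intro ballI allI impI)
  fix t i j assume t: "t \<in> {0..T}" and ij: "i < j \<and> j < N"
  have traj: "trajectory N T \<alpha> \<xi>" using assms(5) by (simp add: optimal_def)
  have "p t i - p t j \<ge> 0"
  proof (rule backward_linear_equation_nonneg
      [where D = "\<lambda>u. p u i - p u j" and E = "\<lambda>u. 2 * (\<xi> u i - \<xi> u j)" and c = 1])
    show "continuous_on {0..T} (\<lambda>u. p u i - p u j)"
      using assms(7) ij unfolding covector_def by (intro continuous_intros) auto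
    show "continuous_on {0..T} (\<lambda>u. 2 * (\<xi> u i - \<xi> u j))"
      using traj ij unfolding trajectory_def by (intro continuous_intros) auto
    show "0 \<le> 2 * (\<xi> u i - \<xi> u j)" if "u \<in> {0..T}" for u
      using assms(6) that ij by auto
    show "p T i - p T j \<ge> 0" using assms(7) ij unfolding covector_def by auto
    show "((\<lambda>s. 1 * (p s i - p s j) - 2 * (\<xi> s i - \<xi> s j)) has_integral
           ((p T i - p T j) - (p u i - p u j))) {u..T}" if "u \<in> {0..T}" for u
      using covector_difference_equation[OF assms(7) _ _ that] ij by simp
  qed (use t in simp)
  then show "p t i \<ge> p t j" by simp
qed

end
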